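(* Assume the standing assumptions and, in addition, that $g$ is real-valued on all of $\mathbb{R}^m$ and differentiable with $\frac1\kappa$-Lipschitz continuous gradient for some $\kappa>0$ (so $\theta_\rho$ is $\kappa$-strongly convex). Suppose $(D)$ has an optimal solution $p^*$ (a minimizer of $\theta$). Let $\rho>0$ and let $(p_k)_{k\ge0}$ be generated by the fast gradient method applied to $\theta_\rho$. Then for all $k\ge0$, $$\theta(p_k)-\theta(p^* )\le\rho D_f+2\bigl(\theta(0)-\theta(p^* )+\rho D_f\bigr)e^{-k\sqrt{\kappa/L(\rho)}},$$ $$\|\nabla\theta_\rho(p_k)\|\le2\sqrt{L(\rho)\bigl(\theta(0)-\theta(p^* )+\rho D_f\bigr)}\,e^{-\frac k2\sqrt{\kappa/L(\rho)}} .$$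
   Context: Standing assumptions: $\mathcal{H}$ is a real Hilbert space; $f:\mathcal{H}\to\mathbb{R}\cup\{+\infty\}$ is proper, convex, lower semicontinuous with bounded effective domain; $g:\mathbb{R}^m\to\mathbb{R}\cup\{+\infty\}$ is proper, lower semicontinuous and $\mu$-strongly convex for some $\mu>0$; $A:\mathcal{H}\to\mathbb{R}^m$ is linear and continuous with $A(\operatorname{dom} f)\cap\operatorname{dom} g\neq\emptyset$. $(D)$ is $\sup_p\{-f^*(A^*p)-g^*(-p)\}$. $D_f:=\sup\{\tfrac12\|x\|^2:x\in\operatorname{dom} f\}$. $\theta(p):=f^*(A^*p)+g^*(-p)$. $f_\rho^*(q):=\sup_x\{\langle q,x\rangle-f(x)-\frac\rho2\|x\|^2\}$, $\theta_\rho(p):=f_\rho^*(A^*p)+g^*(-p)$, and $L(\rho):=\frac{\|A\|^2}{\rho}+\frac1\mu$ (a Lipschitz constant of $\nabla\theta_\rho$). Fast gradient method on $\theta_\rho$ with strong convexity parameter $\kappa$: $w_0=p_0=0$, $p_{k+1}=w_k-\frac{1}{L(\rho)}\nabla\theta_\rho(w_k)$, $w_{k+1}=p_{k+1}+\frac{\sqrt{L(\rho)}-\sqrt\kappa}{\sqrt{L(\rho)}+\sqrt\kappa}(p_{k+1}-p_k)$. *)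

theory Defs
  imports "HOL-Analysis.Analysis"
begin

definition efdom :: "('a \<Rightarrow> ereal) \<Rightarrow> 'a set" where
  "efdom f = {x. f x < \<infinity>}"

definition eproper :: "('a \<Rightarrow> ereal) \<Rightarrow> bool" where
  "eproper f \<longleftrightarrow> efdom f \<noteq> {} \<and> (\<forall>x. f x \<noteq> -\<infinity>)"

definition econvex :: "('a::real_vector \<Rightarrow> ereal) \<Rightarrow> bool" where
  "econvex f \<longleftrightarrow> (\<forall>x y t. 0 \<le> t \<and> t \<le> 1 \<longrightarrow>
      f ((1 - t) *\<^sub>R x + t *\<^sub>R y) \<le> ereal (1 - t) * f x + ereal t * f y)"

definition elsc :: "('a::topological_space \<Rightarrow> ereal) \<Rightarrow> bool" where
  "elsc f \<longleftrightarrow> (\<forall>x. f x \<le> Liminf (at x) f)"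

definition fconj :: "('a::real_inner \<Rightarrow> ereal) \<Rightarrow> 'a \<Rightarrow> ereal" where
  "fconj f y = (SUP x. ereal (inner y x) - f x)"

definition fconj_rho :: "real \<Rightarrow> ('a::real_inner \<Rightarrow> ereal) \<Rightarrow> 'a \<Rightarrow> ereal" where
  "fconj_rho \<rho> f q = (SUP x. ereal (inner q x) - f x - ereal (\<rho> / 2 * (norm x)\<^sup>2))"

definition grad :: "('b::real_inner \<Rightarrow> real) \<Rightarrow> 'b \<Rightarrow> 'b" where
  "grad F y = (THE v. (F has_derivative (\<lambda>h. inner v h)) (at y))"

definition Dconst :: "('a::real_normed_vector \<Rightarrow> ereal) \<Rightarrow> real" where
  "Dconst f = (SUP x \<in> efdom f. (norm x)\<^sup>2 / 2)"

text \<open>Fast gradient method: returns \<open>(p_k, w_k)\<close>, with step \<open>1/L\<close> and momentum \<open>\<beta>\<close>.\<close>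
fun fgm :: "('b::real_vector \<Rightarrow> 'b) \<Rightarrow> real \<Rightarrow> real \<Rightarrow> nat \<Rightarrow> 'b \<times> 'b" where
  "fgm G L \<beta> 0 = (0, 0)"
| "fgm G L \<beta> (Suc k) =
     (let (p, w) = fgm G L \<beta> k;
          p' = w - (1 / L) *\<^sub>R G w
      in (p', p' + \<beta> *\<^sub>R (p' - p)))"

end

theory Submission
  imports Defs
begin

text \<open>
  The smoothed dual function \<open>\<theta>\<^sub>\<rho>(p) = f\<^sup>*\<^sub>\<rho>(A\<^sup>*p) + g\<^sup>*(-p)\<close> is real valued, differentiable,
  \<open>\<kappa>\<close>-strongly convex and has an \<open>L(\<rho>)\<close>-Lipschitz gradient, and it lies between
  \<open>\<theta> - \<rho> D\<^sub>f\<close> and \<open>\<theta>\<close>.  The rates for \<open>\<theta>\<close> therefore follow from the linear rate of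
  Nesterov's method for smooth strongly convex functions.
\<close>

lemma inner_minus_sq_le:
  fixes d e :: "'a::real_inner"
  assumes c: "c > 0"
  shows "inner d e - c/2 * (norm e)\<^sup>2 \<le> (norm d)\<^sup>2 / (2*c)"
proof -
  have "0 \<le> (norm (d - c *\<^sub>R e))\<^sup>2" by simp
  also have "\<dots> = (norm d)\<^sup>2 - 2*c*inner d e + c\<^sup>2 * (norm e)\<^sup>2"
    unfolding power2_norm_eq_inner
    by (simp add: inner_diff_left inner_diff_right inner_commute power2_eq_square algebra_simps)
  finally show ?thesis using c by (simp add: field_simps power2_eq_square)
qed

text \<open>This is what makes \<open>\<rho>/2 \<parallel>x\<parallel>\<^sup>2\<close> strongly convex.\<close>

lemma norm_convex_comb_sq:
  fixes a b :: "'a::real_inner"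
  shows "(norm ((1-t) *\<^sub>R a + t *\<^sub>R b))\<^sup>2
           = (1-t) * (norm a)\<^sup>2 + t * (norm b)\<^sup>2 - t*(1-t) * (norm (a - b))\<^sup>2"
  unfolding power2_norm_eq_inner
  by (simp add: inner_add_left inner_add_right inner_diff_left inner_diff_right inner_commute
      algebra_simps)

text \<open>A real inequality that holds with a factor \<open>1 - t\<close> for all small \<open>t > 0\<close> holds
  for \<open>t = 0\<close>; used to pass to the limit in a convexity argument.\<close>

lemma nonpos_of_nonpos_for_small_t:
  fixes a c :: real
  assumes a: "a \<ge> 0" and h: "\<And>t. 0 < t \<Longrightarrow> t < 1 \<Longrightarrow> c + a * (1 - t) \<le> 0"
  shows "c + a \<le> 0"
proof (rule field_le_epsilon)
  fix e :: real assume e: "0 < e"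
  define t where "t = min (1/2) (e / (a + 1))"
  have t: "0 < t" "t < 1" using a e by (auto simp: t_def)
  have "a * t \<le> a * (e / (a + 1))" using a by (intro mult_left_mono) (auto simp: t_def)
  also have "\<dots> \<le> e" using a e by (simp add: field_simps)
  finally show "c + a \<le> 0 + e" using h[OF t] by (simp add: algebra_simps)
qed

lemma one_minus_power_le_exp:
  assumes "0 \<le> q" "q \<le> 1"
  shows "(1 - q)^k \<le> exp (- real k * q)"
proof -
  have "(1 - q)^k \<le> exp (-q)^k"
    using assms by (intro power_mono) (auto simp: exp_ge_add_one_self[of "-q", simplified])
  also have "\<dots> = exp (- real k * q)" by (simp add: exp_of_nat_mult[symmetric])
  finally show ?thesis .
qed

lemma has_real_derivative_along_line:
  fixes g :: "'b::real_inner \<Rightarrow> real"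
  assumes g_deriv: "\<And>z. (g has_derivative (\<lambda>h. inner (G z) h)) (at z)"
  shows "((\<lambda>t. g (x + t *\<^sub>R d)) has_real_derivative inner (G (x + t *\<^sub>R d)) d) (at t)"
proof -
  have "((\<lambda>t. x + t *\<^sub>R d) has_derivative (\<lambda>h. h *\<^sub>R d)) (at t)"
    by (auto intro!: derivative_eq_intros)
  from has_derivative_compose[OF this g_deriv]
  have "((\<lambda>t. g (x + t *\<^sub>R d)) has_derivative (\<lambda>h. h * inner (G (x + t *\<^sub>R d)) d)) (at t)"
    by simp
  then show ?thesis by (simp add: has_field_derivative_def mult_commute_abs)
qed

lemma strongly_convex_first_order:
  fixes g :: "'b::real_inner \<Rightarrow> real"
  assumes g_deriv: "\<And>z. (g has_derivative (\<lambda>h. inner (G z) h)) (at z)"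
    and convex: "convex_on UNIV (\<lambda>y. g y - \<mu>/2 * (norm y)\<^sup>2)"
  shows "g x + inner (G x) (y - x) + \<mu>/2 * (norm (y - x))\<^sup>2 \<le> g y"
proof -
  define d where "d = y - x"
  define \<phi> where "\<phi> t = g (x + t *\<^sub>R d) - \<mu>/2 * (inner x x + 2*t*inner x d + t\<^sup>2 * inner d d)"
    for t
  have \<phi>_eq: "\<phi> t = g (x + t *\<^sub>R d) - \<mu>/2 * (norm (x + t *\<^sub>R d))\<^sup>2" for t
    unfolding \<phi>_def power2_norm_eq_inner
    by (simp add: inner_add_left inner_add_right inner_commute power2_eq_square algebra_simps)
  have \<phi>_convex: "convex_on UNIV \<phi>"
  proof (rule convex_onI)
    fix t u v :: real assume t: "0 < t" "t < 1"
    have "x + ((1 - t) * u + t * v) *\<^sub>R d = (1-t) *\<^sub>R (x + u *\<^sub>R d) + t *\<^sub>R (x + v *\<^sub>R d)"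
      by (simp add: algebra_simps)
    then show "\<phi> ((1 - t) *\<^sub>R u + t *\<^sub>R v) \<le> (1 - t) * \<phi> u + t * \<phi> v"
      unfolding \<phi>_eq using convex_onD[OF convex, of t "x + u *\<^sub>R d" "x + v *\<^sub>R d"] t by simp
  qed simp
  have \<phi>_deriv: "(\<phi> has_real_derivative (inner (G x) d - \<mu> * inner x d)) (at 0)"
  proof -
    have "(\<phi> has_real_derivative (inner (G (x + 0 *\<^sub>R d)) d
            - \<mu>/2 * (2 * inner x d + (real 2 * 0^(2-1)) * inner d d))) (at 0)"
      unfolding \<phi>_def
      by (auto intro!: derivative_eq_intros has_real_derivative_along_line[OF g_deriv])
    then show ?thesis by simp
  qed
  have "inner (G x) d - \<mu> * inner x d \<le> \<phi> 1 - \<phi> 0"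
    using convex_on_imp_above_tangent[OF \<phi>_convex, of 0 1] \<phi>_deriv
    by (simp add: has_field_derivative_at_within)
  then show ?thesis
    by (simp add: \<phi>_def d_def power2_norm_eq_inner inner_diff_left inner_diff_right
        inner_commute algebra_simps)
qed

lemma descent_lemma:
  fixes g :: "'b::real_inner \<Rightarrow> real"
  assumes g_deriv: "\<And>z. (g has_derivative (\<lambda>h. inner (G z) h)) (at z)"
    and G_lipschitz: "\<And>y z. norm (G y - G z) \<le> (1/\<kappa>) * norm (y - z)" and \<kappa>: "0 < \<kappa>"
  shows "g y \<le> g x + inner (G x) (y - x) + 1/(2*\<kappa>) * (norm (y - x))\<^sup>2"
proof -
  define d where "d = y - x"
  define \<psi> where "\<psi> t = g (x + t *\<^sub>R d) - t * inner (G x) d - t\<^sup>2/(2*\<kappa>) * (norm d)\<^sup>2" for t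
  define \<psi>' where "\<psi>' t = inner (G (x + t *\<^sub>R d)) d - inner (G x) d - t/\<kappa> * (norm d)\<^sup>2" for t
  have deriv: "(\<psi> has_real_derivative \<psi>' t) (at t)" for t
  proof -
    have "(\<psi> has_real_derivative (inner (G (x + t *\<^sub>R d)) d - inner (G x) d
            - (real 2 * t^(2-1))/(2*\<kappa>) * (norm d)\<^sup>2)) (at t)"
      unfolding \<psi>_def using \<kappa>
      by (auto intro!: derivative_eq_intros has_real_derivative_along_line[OF g_deriv])
    then show ?thesis using \<kappa> by (simp add: \<psi>'_def)
  qed
  have nonpos: "\<psi>' t \<le> 0" if t: "0 \<le> t" for t
  proof -
    have "inner (G (x + t *\<^sub>R d) - G x) d \<le> norm (G (x + t *\<^sub>R d) - G x) * norm d"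
      by (rule norm_cauchy_schwarz)
    also have "\<dots> \<le> ((1/\<kappa>) * norm (t *\<^sub>R d)) * norm d"
      using G_lipschitz[of "x + t *\<^sub>R d" x] by (intro mult_right_mono) auto
    also have "\<dots> = t/\<kappa> * (norm d)\<^sup>2" using t by (simp add: power2_eq_square)
    finally show ?thesis by (simp add: \<psi>'_def inner_diff_left)
  qed
  have "continuous_on {0..1} \<psi>"
    using deriv by (meson DERIV_continuous continuous_at_imp_continuous_on)
  then have "\<psi> 1 \<le> \<psi> 0"
  proof (rule DERIV_nonpos_imp_decreasing_open[of 0 1, rotated 2])
    fix t :: real assume "0 < t" "t < 1"
    then show "\<exists>y. (\<psi> has_real_derivative y) (at t) \<and> y \<le> 0"
      using deriv[of t] nonpos[of t] by (intro exI[of _ "\<psi>' t"]) simp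
  qed simp
  then show ?thesis using \<kappa> by (simp add: \<psi>_def d_def)
qed

text \<open>The algebraic identity behind one step of the fast gradient method: with \<open>\<kappa> = q\<^sup>2 L\<close>,
  the new potential term splits into the old one plus the two lower-model defects.\<close>

lemma fgm_potential_identity:
  fixes a b g :: "'b::real_inner"
  assumes q: "0 < q" and L: "0 < L" and \<kappa>: "\<kappa> = q\<^sup>2 * L"
  shows "\<kappa>/2 * (norm (b + ((1-q)/q) *\<^sub>R a + (1/(q*L)) *\<^sub>R g))\<^sup>2
         = (norm g)\<^sup>2/(2*L) + (1-q) * (inner g a + \<kappa>/2 * (norm a)\<^sup>2 + \<kappa>/2 * (norm (b + (1/q) *\<^sub>R a))\<^sup>2)
           + q * (inner g b + \<kappa>/2 * (norm b)\<^sup>2) - (1-q)*q*(1+q)*L/2 * (norm a)\<^sup>2"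
  using q L unfolding power2_norm_eq_inner \<kappa>
  by (simp add: inner_add_left inner_add_right inner_commute field_simps power2_eq_square)

lemma gradient_unique:
  fixes \<Theta> :: "'b::real_inner \<Rightarrow> real"
  assumes "(\<Theta> has_derivative (\<lambda>h. inner v h)) (at p)"
  shows "grad \<Theta> p = v"
  unfolding grad_def
proof (rule the_equality)
  fix w assume "(\<Theta> has_derivative (\<lambda>h. inner w h)) (at p)"
  then have "(\<lambda>h. inner w h) = (\<lambda>h. inner v h)" using has_derivative_unique assms by blast
  then have "inner (w - v) (w - v) = 0" by (metis inner_diff_left diff_self)
  then show "w = v" by simp
qed (rule assms)

text \<open>A function \<open>\<Theta>\<close> with slopes \<open>V\<close> that lies between the quadratic models with curvatures
  \<open>\<kappa>\<close> and \<open>L\<close>, i.e. an \<open>L\<close>-smooth, \<open>\<kappa>\<close>-strongly convex function with gradient \<open>V\<close>.\<close>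

locale smooth_strongly_convex =
  fixes \<Theta> :: "'b::real_inner \<Rightarrow> real" and V :: "'b \<Rightarrow> 'b" and \<kappa> L :: real
  assumes upper: "\<And>p d. \<Theta> (p + d) \<le> \<Theta> p + inner (V p) d + L/2 * (norm d)\<^sup>2"
    and lower: "\<And>p d. \<Theta> p + inner (V p) d + \<kappa>/2 * (norm d)\<^sup>2 \<le> \<Theta> (p + d)"
    and kappa_pos: "0 < \<kappa>" and kappa_le_L: "\<kappa> \<le> L"
begin

lemma L_pos: "0 < L"
  using kappa_pos kappa_le_L by linarith

lemma gradient_step_descent: "\<Theta> (p - (1/L) *\<^sub>R V p) \<le> \<Theta> p - (norm (V p))\<^sup>2 / (2*L)"
proof -
  have "\<Theta> (p + - (1/L) *\<^sub>R V p) \<le> \<Theta> p + inner (V p) (- (1/L) *\<^sub>R V p) + L/2 * (norm (- (1/L) *\<^sub>R V p))\<^sup>2"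
    by (rule upper)
  also have "\<dots> = \<Theta> p - (norm (V p))\<^sup>2 / (2*L)"
    using L_pos by (simp add: power2_eq_square field_simps flip: power2_norm_eq_inner)
  finally show ?thesis by simp
qed

text \<open>The two quadratic models touch at \<open>p\<close>, so \<open>V p\<close> is the gradient.\<close>

lemma has_derivative: "(\<Theta> has_derivative (\<lambda>h. inner (V p) h)) (at p)"
  unfolding has_derivative_at_alt
proof (intro conjI allI impI exI)
  show "bounded_linear (inner (V p))" by (rule bounded_linear_inner_right)
  fix e :: real assume e: "0 < e"
  show "0 < 2*e/L" using e L_pos by simp
  fix y assume y: "norm (y - p) < 2*e/L"
  define d where "d = y - p"
  have "0 \<le> \<kappa>/2 * (norm d)\<^sup>2" using kappa_pos by simp
  then have "0 \<le> \<Theta> y - \<Theta> p - inner (V p) d"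
    using lower[of p d] by (simp add: d_def)
  moreover have "\<Theta> y - \<Theta> p - inner (V p) d \<le> (L/2 * norm d) * norm d"
    using upper[of p d] by (simp add: d_def power2_eq_square)
  moreover have "(L/2 * norm d) * norm d \<le> e * norm d"
    using y L_pos by (intro mult_right_mono) (auto simp: d_def field_simps)
  ultimately show "norm (\<Theta> y - \<Theta> p - inner (V p) (y - p)) \<le> e * norm (y - p)"
    by (simp add: d_def)
qed

lemma grad_eq: "grad \<Theta> p = V p"
  by (rule gradient_unique[OF has_derivative])

lemma continuous: "continuous_on UNIV \<Theta>"
  using has_derivative by (meson continuous_at_imp_continuous_on has_derivative_continuous)

lemma minimizer_gradient_bound:
  assumes opt: "\<And>p. \<Theta> xs \<le> \<Theta> p"
  shows "(norm (V p))\<^sup>2 \<le> 2 * L * (\<Theta> p - \<Theta> xs)"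
proof -
  have "\<Theta> xs \<le> \<Theta> p - (norm (V p))\<^sup>2 / (2*L)"
    using opt[of "p - (1/L) *\<^sub>R V p"] gradient_step_descent[of p] by linarith
  then show ?thesis using L_pos by (simp add: field_simps)
qed

text \<open>Lyapunov function of the fast gradient method for iterate \<open>x\<close> and extrapolated point \<open>y\<close>:
  optimality gap plus \<open>\<kappa>/2\<close> times the squared distance of the estimating point to a minimizer.\<close>

definition potential :: "real \<Rightarrow> 'b \<Rightarrow> 'b \<Rightarrow> 'b \<Rightarrow> real" where
  "potential q xs x y = \<Theta> x - \<Theta> xs + \<kappa>/2 * (norm ((1/q) *\<^sub>R ((1+q) *\<^sub>R y - x) - xs))\<^sup>2"

text \<open>For the step analysis fix the rate \<open>q\<close> with \<open>\<kappa> = q\<^sup>2 L\<close>, i.e. \<open>q = \<surd>(\<kappa>/L)\<close>.\<close>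

context
  fixes q :: real
  assumes q_pos: "0 < q" and q_le_1: "q \<le> 1" and kappa_eq: "\<kappa> = q\<^sup>2 * L"
begin

lemma gradient_step_potential:
  fixes x y :: 'b
  assumes opt: "\<And>p. \<Theta> xs \<le> \<Theta> p"
  defines "p' \<equiv> y - (1/L) *\<^sub>R V y"
  shows "\<Theta> p' - \<Theta> xs + \<kappa>/2 * (norm ((1/q) *\<^sub>R (p' - (1-q) *\<^sub>R x) - xs))\<^sup>2
           \<le> (1-q) * potential q xs x y"
proof -
  define g a b where "g = V y" and "a = x - y" and "b = xs - y"
  have descent: "\<Theta> p' \<le> \<Theta> y - (norm g)\<^sup>2 / (2*L)"
    unfolding p'_def g_def by (rule gradient_step_descent)
  have lower_a: "0 \<le> \<Theta> x - (\<Theta> y + inner g a + \<kappa>/2 * (norm a)\<^sup>2)"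
    using lower[of y a] by (simp add: g_def a_def)
  have lower_b: "0 \<le> \<Theta> xs - (\<Theta> y + inner g b + \<kappa>/2 * (norm b)\<^sup>2)"
    using lower[of y b] by (simp add: g_def b_def)
  have new_v: "(1/q) *\<^sub>R (p' - (1-q) *\<^sub>R x) - xs = - (b + ((1-q)/q) *\<^sub>R a + (1/(q*L)) *\<^sub>R g)"
  proof -
    have e: "(1-q)/q = 1/q - 1" "1/(q*L) = (1/q)*(1/L)" using q_pos by (auto simp: field_simps)
    show ?thesis unfolding e p'_def a_def b_def g_def using q_pos
      by (simp add: algebra_simps)
  qed
  have old_v: "(1/q) *\<^sub>R ((1+q) *\<^sub>R y - x) - xs = - (b + (1/q) *\<^sub>R a)"
  proof -
    have "(1/q)*(1+q) = 1/q + 1" using q_pos by (auto simp: field_simps)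
    then show ?thesis using q_pos
      by (simp add: a_def b_def scaleR_diff_right scaleR_add_left algebra_simps)
  qed
  have "(1-q) * potential q xs x y
          - (\<Theta> p' - \<Theta> xs + \<kappa>/2 * (norm ((1/q) *\<^sub>R (p' - (1-q) *\<^sub>R x) - xs))\<^sup>2)
        = (1-q) * (\<Theta> x - (\<Theta> y + inner g a + \<kappa>/2 * (norm a)\<^sup>2))
          + q * (\<Theta> xs - (\<Theta> y + inner g b + \<kappa>/2 * (norm b)\<^sup>2))
          + (\<Theta> y - (norm g)\<^sup>2 / (2*L) - \<Theta> p') + (1-q)*q*(1+q)*L/2 * (norm a)\<^sup>2"
    unfolding potential_def new_v old_v norm_minus_cancel
      fgm_potential_identity[OF q_pos L_pos kappa_eq]
    by (simp add: algebra_simps)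
  moreover have "0 \<le> (1-q)*q*(1+q)*L/2 * (norm a)\<^sup>2"
    using q_pos q_le_1 L_pos by simp
  ultimately show ?thesis
    using descent mult_nonneg_nonneg[OF _ lower_a, of "1-q"] mult_nonneg_nonneg[OF _ lower_b, of q]
      q_pos q_le_1 by linarith
qed

lemma fgm_potential_contraction:
  assumes opt: "\<And>p. \<Theta> xs \<le> \<Theta> p" and \<beta>: "(1+q) * \<beta> = 1 - q"
  shows "case_prod (potential q xs) (fgm V L \<beta> n) \<le> (1-q)^n * case_prod (potential q xs) (fgm V L \<beta> 0)"
proof (induction n)
  case (Suc n)
  obtain x y where xy: "fgm V L \<beta> n = (x, y)" by (cases "fgm V L \<beta> n")
  define p' where "p' = y - (1/L) *\<^sub>R V y"
  have "(1+q) *\<^sub>R (p' + \<beta> *\<^sub>R (p' - x)) = (1+q) *\<^sub>R p' + ((1+q) * \<beta>) *\<^sub>R (p' - x)"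
    by (simp add: scaleR_add_right)
  then have "(1+q) *\<^sub>R (p' + \<beta> *\<^sub>R (p' - x)) - p' = p' - (1-q) *\<^sub>R x"
    unfolding \<beta> by (simp add: algebra_simps)
  then have "case_prod (potential q xs) (fgm V L \<beta> (Suc n)) \<le> (1-q) * potential q xs x y"
    using gradient_step_potential[OF opt, of y x]
    by (simp add: xy p'_def Let_def potential_def)
  also have "\<dots> \<le> (1-q) * ((1-q)^n * case_prod (potential q xs) (fgm V L \<beta> 0))"
    using Suc q_le_1 by (intro mult_left_mono) (auto simp: xy)
  finally show ?case by simp
qed simp

end

text \<open>Linear rate of the fast gradient method for the optimality gap, \<open>q = \<surd>(\<kappa>/L)\<close>;
  the initial potential is at most twice the initial gap by strong convexity.\<close>

lemma fgm_gap_rate: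
  assumes opt: "\<And>p. \<Theta> xs \<le> \<Theta> p" and M: "\<Theta> 0 - \<Theta> xs \<le> M"
  shows "\<Theta> (fst (fgm V L ((sqrt L - sqrt \<kappa>) / (sqrt L + sqrt \<kappa>)) k)) - \<Theta> xs
           \<le> 2 * M * exp (- real k * sqrt (\<kappa>/L))"
proof -
  define q where "q = sqrt (\<kappa>/L)"
  define \<beta> where "\<beta> = (sqrt L - sqrt \<kappa>) / (sqrt L + sqrt \<kappa>)"
  have q: "0 < q" "q \<le> 1" "\<kappa> = q\<^sup>2 * L"
    using kappa_pos kappa_le_L L_pos by (auto simp: q_def)
  have \<beta>: "(1+q) * \<beta> = 1 - q"
  proof -
    have "sqrt \<kappa> = q * sqrt L" using kappa_pos L_pos by (simp add: q_def real_sqrt_divide)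
    then have "\<beta> = ((1-q) * sqrt L) / ((1+q) * sqrt L)" by (simp add: \<beta>_def algebra_simps)
    also have "\<dots> = (1-q) / (1+q)" using L_pos by simp
    finally show ?thesis using q(1) by (simp add: field_simps)
  qed
  have "V xs = 0"
    using minimizer_gradient_bound[OF opt, of xs] by simp
  then have "\<kappa>/2 * (norm xs)\<^sup>2 \<le> \<Theta> 0 - \<Theta> xs"
    using lower[of xs "- xs"] by simp
  then have init: "0 \<le> potential q xs 0 0" "potential q xs 0 0 \<le> 2 * M"
    using M opt[of 0] kappa_pos unfolding potential_def by simp_all
  obtain x y where xy: "fgm V L \<beta> k = (x, y)" by (cases "fgm V L \<beta> k")
  have "\<Theta> x - \<Theta> xs \<le> potential q xs x y"
    using kappa_pos by (simp add: potential_def)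
  also have "\<dots> \<le> (1-q)^k * case_prod (potential q xs) (fgm V L \<beta> 0)"
    using fgm_potential_contraction[OF q opt \<beta>, of k] by (simp add: xy)
  also have "\<dots> \<le> exp (- real k * q) * (2 * M)"
    using init q(1,2) by (intro mult_mono one_minus_power_le_exp) auto
  finally show ?thesis using xy by (simp add: q_def \<beta>_def mult_ac)
qed

lemma fgm_gradient_rate:
  assumes opt: "\<And>p. \<Theta> xs \<le> \<Theta> p" and M: "\<Theta> 0 - \<Theta> xs \<le> M"
  shows "norm (V (fst (fgm V L ((sqrt L - sqrt \<kappa>) / (sqrt L + sqrt \<kappa>)) k)))
           \<le> 2 * sqrt (L * M) * exp (- (real k / 2) * sqrt (\<kappa>/L))"
proof -
  define p where "p = fst (fgm V L ((sqrt L - sqrt \<kappa>) / (sqrt L + sqrt \<kappa>)) k)"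
  define e where "e = exp (- (real k / 2) * sqrt (\<kappa>/L))"
  have M_nonneg: "0 \<le> M" using opt[of 0] M by linarith
  have "e\<^sup>2 = exp (- real k * sqrt (\<kappa>/L))"
    by (simp add: e_def power2_eq_square flip: exp_add)
  then have "(norm (V p))\<^sup>2 \<le> 2 * L * (2 * M * e\<^sup>2)"
    using minimizer_gradient_bound[OF opt, of p] fgm_gap_rate[OF opt M, of k] L_pos
    unfolding p_def by (smt (verit) mult_left_mono)
  also have "\<dots> = (2 * sqrt (L * M) * e)\<^sup>2"
    using L_pos M_nonneg by (simp add: power_mult_distrib)
  finally show ?thesis
    unfolding p_def[symmetric] e_def[symmetric]
    by (rule power2_le_imp_le) (use L_pos M_nonneg in \<open>simp add: e_def\<close>)
qed

end

lemma quadratic_growth_attains_min: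
  fixes \<Phi> :: "'b::euclidean_space \<Rightarrow> real"
  assumes cont: "continuous_on UNIV \<Phi>" and c: "0 < c"
    and growth: "\<And>d. \<Phi> 0 + inner v d + c/2 * (norm d)\<^sup>2 \<le> \<Phi> d"
  shows "\<exists>x. \<forall>y. \<Phi> x \<le> \<Phi> y"
proof -
  define R where "R = 2 * norm v / c"
  have R: "0 \<le> R" using c by (simp add: R_def)
  have outside: "\<Phi> 0 < \<Phi> y" if y: "R < norm y" for y
  proof -
    have "norm v < c/2 * norm y" using y c by (simp add: R_def field_simps)
    moreover have "0 < norm y" using y R by linarith
    ultimately have "norm v * norm y < c/2 * (norm y)\<^sup>2"
      by (simp add: power2_eq_square)
    moreover have "- (norm v * norm y) \<le> inner v y"
      using norm_cauchy_schwarz[of "-v" y] by simp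
    ultimately show ?thesis using growth[of y] by linarith
  qed
  have "cball 0 R \<noteq> {}" using R by simp
  moreover have "continuous_on (cball 0 R) \<Phi>" using cont by (rule continuous_on_subset) simp
  ultimately obtain x where x: "x \<in> cball 0 R" "\<And>y. y \<in> cball 0 R \<Longrightarrow> \<Phi> x \<le> \<Phi> y"
    using continuous_attains_inf[OF compact_cball] by blast
  have "\<Phi> x \<le> \<Phi> y" for y
  proof (cases "y \<in> cball 0 R")
    case False
    then have "\<Phi> 0 < \<Phi> y" by (intro outside) simp
    moreover have "\<Phi> x \<le> \<Phi> 0" using x(2) R by simp
    ultimately show ?thesis by simp
  qed (use x in auto)
  then show ?thesis by blast
qed

lemma quadratic_sandwich_constants:
  fixes \<Theta> :: "'b::euclidean_space \<Rightarrow> real"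
  assumes "\<Theta> d \<le> \<Theta> 0 + inner v d + L/2 * (norm d)\<^sup>2"
    and "\<Theta> 0 + inner v d + \<kappa>/2 * (norm d)\<^sup>2 \<le> \<Theta> d"
    and "d \<noteq> 0"
  shows "\<kappa> \<le> L"
proof -
  have "\<kappa> * (norm d)\<^sup>2 \<le> L * (norm d)\<^sup>2" using assms(1,2) by linarith
  moreover have "0 < (norm d)\<^sup>2" using assms(3) by simp
  ultimately show ?thesis by (simp only: mult_le_cancel_right_pos)
qed

locale strongly_convex_smooth =
  fixes g :: "'b::euclidean_space \<Rightarrow> real" and G :: "'b \<Rightarrow> 'b" and \<mu> \<kappa> :: real
  assumes g_deriv: "\<And>z. (g has_derivative (\<lambda>h. inner (G z) h)) (at z)"
    and strongly_convex: "convex_on UNIV (\<lambda>y. g y - \<mu>/2 * (norm y)\<^sup>2)"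
    and G_lipschitz: "\<And>y z. norm (G y - G z) \<le> (1/\<kappa>) * norm (y - z)"
    and mu_pos: "0 < \<mu>" and kappa_pos: "0 < \<kappa>"
begin

text \<open>The supremum defining \<open>g\<^sup>*(p)\<close> is attained, by strong convexity of \<open>g\<close>.\<close>

lemma gconj_maximizer_exists: "\<exists>y. \<forall>z. inner p z - g z \<le> inner p y - g y"
proof -
  have "continuous_on UNIV g"
    using g_deriv by (meson continuous_at_imp_continuous_on has_derivative_continuous)
  then have "continuous_on UNIV (\<lambda>z. g z - inner p z)" by (intro continuous_intros)
  moreover have "(g 0 - inner p 0) + inner (G 0 - p) z + \<mu>/2 * (norm z)\<^sup>2 \<le> g z - inner p z" for z
    using strongly_convex_first_order[OF g_deriv strongly_convex, of 0 z] by (simp add: inner_diff_left)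
  ultimately obtain y where y: "\<forall>z. g y - inner p y \<le> g z - inner p z"
    using quadratic_growth_attains_min[OF _ mu_pos] by blast
  have "inner p z - g z \<le> inner p y - g y" for z
    using y by (simp add: algebra_simps)
  then show ?thesis by blast
qed

definition gconj_arg :: "'b \<Rightarrow> 'b" where
  "gconj_arg p = (SOME y. \<forall>z. inner p z - g z \<le> inner p y - g y)"

definition gconj :: "'b \<Rightarrow> real" where
  "gconj p = inner p (gconj_arg p) - g (gconj_arg p)"

lemma gconj_arg_max: "inner p z - g z \<le> gconj p"
  using someI_ex[OF gconj_maximizer_exists[of p]] unfolding gconj_def gconj_arg_def by blast

lemma G_gconj_arg: "G (gconj_arg p) = p"
proof -
  define y e where "y = gconj_arg p" and "e = p - G y"
  have "g (y + \<kappa> *\<^sub>R e) \<le> g y + \<kappa> * inner (G y) e + \<kappa>/2 * (norm e)\<^sup>2"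
    using descent_lemma[OF g_deriv G_lipschitz kappa_pos, of "y + \<kappa> *\<^sub>R e" y] kappa_pos
    by (simp add: power2_eq_square mult_ac)
  moreover have "inner p (y + \<kappa> *\<^sub>R e) - g (y + \<kappa> *\<^sub>R e) \<le> inner p y - g y"
    using gconj_arg_max by (simp add: gconj_def y_def)
  ultimately have "\<kappa> * inner (p - G y) e \<le> \<kappa>/2 * (norm e)\<^sup>2"
    by (simp add: inner_add_right inner_diff_left algebra_simps)
  then have "\<kappa> * (norm e)\<^sup>2 \<le> 0"
    by (simp add: e_def power2_norm_eq_inner)
  then have "e = 0" using kappa_pos by (simp add: mult_le_0_iff)
  then show ?thesis by (simp add: e_def y_def)
qed

lemma gconj_upper: "gconj p' \<le> gconj p + inner (p' - p) (gconj_arg p) + 1/(2*\<mu>) * (norm (p' - p))\<^sup>2"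
proof -
  define y y' where "y = gconj_arg p" and "y' = gconj_arg p'"
  have "g y + inner p (y' - y) + \<mu>/2 * (norm (y' - y))\<^sup>2 \<le> g y'"
    using strongly_convex_first_order[OF g_deriv strongly_convex, of y y'] by (simp add: y_def G_gconj_arg)
  moreover have "inner (p' - p) (y' - y) - \<mu>/2 * (norm (y' - y))\<^sup>2 \<le> (norm (p' - p))\<^sup>2/(2*\<mu>)"
    by (rule inner_minus_sq_le[OF mu_pos])
  ultimately show ?thesis unfolding gconj_def y_def[symmetric] y'_def[symmetric]
    by (simp add: inner_diff_left inner_diff_right algebra_simps)
qed

text \<open>\<open>g\<^sup>*\<close> is \<open>\<kappa>\<close>-strongly convex, because \<open>g\<close> has a \<open>1/\<kappa>\<close>-Lipschitz gradient.\<close>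

lemma gconj_lower: "gconj p + inner (p' - p) (gconj_arg p) + \<kappa>/2 * (norm (p' - p))\<^sup>2 \<le> gconj p'"
proof -
  define y d where "y = gconj_arg p" and "d = p' - p"
  have "g (y + \<kappa> *\<^sub>R d) \<le> g y + \<kappa> * inner p d + \<kappa>/2 * (norm d)\<^sup>2"
    using descent_lemma[OF g_deriv G_lipschitz kappa_pos, of "y + \<kappa> *\<^sub>R d" y] kappa_pos
    by (simp add: power2_eq_square mult_ac y_def G_gconj_arg)
  moreover have "inner p' y + \<kappa> * inner p' d - g (y + \<kappa> *\<^sub>R d) \<le> gconj p'"
    using gconj_arg_max[of p' "y + \<kappa> *\<^sub>R d"] by (simp add: inner_add_right)
  moreover have "\<kappa> * inner p' d = \<kappa> * inner p d + \<kappa> * (norm d)\<^sup>2"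
    by (simp add: d_def power2_norm_eq_inner inner_diff_left algebra_simps)
  moreover have "gconj p + inner (p' - p) (gconj_arg p) = inner p' y - g y"
    by (simp add: gconj_def y_def inner_diff_left)
  ultimately show ?thesis unfolding d_def[symmetric] by linarith
qed

lemma fconj_eq_gconj: "fconj (\<lambda>y. ereal (g y)) p = ereal (gconj p)"
  unfolding fconj_def
proof (rule antisym)
  show "(SUP x. ereal (inner p x) - ereal (g x)) \<le> ereal (gconj p)"
    using gconj_arg_max by (intro SUP_least) simp
  show "ereal (gconj p) \<le> (SUP x. ereal (inner p x) - ereal (g x))"
    by (rule SUP_upper2[of "gconj_arg p"]) (simp_all add: gconj_def)
qed

end

locale regularized_conjugate =
  fixes f :: "'a::{real_inner, complete_space} \<Rightarrow> ereal" and \<rho> :: real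
  assumes f_proper: "eproper f" and f_convex: "econvex f" and f_lsc: "elsc f"
    and f_bdd_dom: "bounded (efdom f)" and rho_pos: "0 < \<rho>"
begin

definition fval :: "'a \<Rightarrow> real" where
  "fval x = real_of_ereal (f x)"

lemma f_in_dom: "x \<in> efdom f \<Longrightarrow> f x = ereal (fval x)"
  using f_proper unfolding eproper_def efdom_def fval_def by (cases "f x") auto

lemma f_notin_dom: "x \<notin> efdom f \<Longrightarrow> f x = \<infinity>"
  unfolding efdom_def by auto

lemma dom_nonempty: "efdom f \<noteq> {}"
  using f_proper unfolding eproper_def by auto

lemma dom_bound: obtains B where "0 \<le> B" "\<And>x. x \<in> efdom f \<Longrightarrow> norm x \<le> B"
  using f_bdd_dom unfolding bounded_iff by (meson norm_ge_zero order_trans)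

lemma fval_convex:
  assumes "x \<in> efdom f" "y \<in> efdom f" "0 \<le> t" "t \<le> 1"
  shows "(1-t) *\<^sub>R x + t *\<^sub>R y \<in> efdom f"
    and "fval ((1-t) *\<^sub>R x + t *\<^sub>R y) \<le> (1-t) * fval x + t * fval y"
proof -
  have "f ((1-t) *\<^sub>R x + t *\<^sub>R y) \<le> ereal (1-t) * f x + ereal t * f y"
    using f_convex assms unfolding econvex_def by blast
  also have "\<dots> = ereal ((1-t) * fval x + t * fval y)" using assms by (simp add: f_in_dom)
  finally have le: "f ((1-t) *\<^sub>R x + t *\<^sub>R y) \<le> ereal ((1-t) * fval x + t * fval y)" .
  then show dom: "(1-t) *\<^sub>R x + t *\<^sub>R y \<in> efdom f"
    unfolding efdom_def by (auto intro: le_less_trans)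
  show "fval ((1-t) *\<^sub>R x + t *\<^sub>R y) \<le> (1-t) * fval x + t * fval y"
    using le f_in_dom[OF dom] by simp
qed

lemma f_lsc_ball:
  assumes "c < f x"
  obtains \<delta> where "0 < \<delta>" "\<And>y. dist y x < \<delta> \<Longrightarrow> c < f y"
proof -
  have "f x \<le> Liminf (at x) f" using f_lsc unfolding elsc_def by blast
  then have "eventually (\<lambda>z. c < f z) (at x)" using assms le_Liminf_iff by blast
  then obtain \<delta> where "0 < \<delta>" "\<And>z. z \<noteq> x \<Longrightarrow> dist z x < \<delta> \<Longrightarrow> c < f z"
    unfolding eventually_at by auto
  then show ?thesis using that assms by metis
qed

text \<open>A convex lsc function is bounded below on its bounded domain: values far below
  \<open>f x\<^sub>0\<close> would, by convexity, appear arbitrarily close to \<open>x\<^sub>0\<close>.\<close>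

lemma fval_bounded_below: obtains m where "\<And>x. x \<in> efdom f \<Longrightarrow> m \<le> fval x"
proof -
  obtain x0 where x0: "x0 \<in> efdom f" using dom_nonempty by auto
  obtain B where B: "0 \<le> B" "\<And>x. x \<in> efdom f \<Longrightarrow> norm x \<le> B" using dom_bound by blast
  obtain \<delta> where \<delta>: "0 < \<delta>" "\<And>y. dist y x0 < \<delta> \<Longrightarrow> ereal (fval x0 - 1) < f y"
    using f_lsc_ball[of "fval x0 - 1" x0] f_in_dom[OF x0] by auto
  define t where "t = min (1/2) (\<delta> / (2*B + 1))"
  have t: "0 < t" "t \<le> 1" using \<delta> B by (auto simp: t_def)
  have "fval x0 - 1/t \<le> fval x" if x: "x \<in> efdom f" for x
  proof -
    define z where "z = (1-t) *\<^sub>R x0 + t *\<^sub>R x"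
    have z: "z \<in> efdom f" "fval z \<le> (1-t) * fval x0 + t * fval x"
      using fval_convex[OF x0 x] t by (simp_all add: z_def)
    have "dist z x0 = t * norm (x - x0)"
      using t by (simp add: z_def dist_norm algebra_simps flip: scaleR_diff_right)
    also have "\<dots> \<le> t * (2*B)"
      using t norm_triangle_ineq4[of x x0] B(2)[OF x] B(2)[OF x0] by (intro mult_left_mono) auto
    also have "\<dots> \<le> \<delta> / (2*B + 1) * (2*B)"
      using B by (intro mult_right_mono) (auto simp: t_def)
    also have "\<dots> < \<delta>" using \<delta> B by (simp add: field_simps)
    finally have "ereal (fval x0 - 1) < f z" by (rule \<delta>(2))
    then have "fval x0 - 1 < fval z" using f_in_dom[OF z(1)] by simp
    then have "t * (fval x0 - 1/t) \<le> t * fval x"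
      using z(2) t by (simp add: algebra_simps)
    then show ?thesis using t by simp
  qed
  then show ?thesis using that by blast
qed

definition reg_obj :: "'a \<Rightarrow> 'a \<Rightarrow> real" where
  "reg_obj q x = inner q x - fval x - \<rho>/2 * (norm x)\<^sup>2"

lemma reg_obj_bdd_above: "bdd_above (reg_obj q ` efdom f)"
proof -
  obtain B where B: "0 \<le> B" "\<And>x. x \<in> efdom f \<Longrightarrow> norm x \<le> B" using dom_bound by blast
  obtain m where m: "\<And>x. x \<in> efdom f \<Longrightarrow> m \<le> fval x" using fval_bounded_below by blast
  have "reg_obj q x \<le> norm q * B - m" if x: "x \<in> efdom f" for x
  proof -
    have "inner q x \<le> norm q * B"
      using norm_cauchy_schwarz[of q x] mult_left_mono[OF B(2)[OF x], of "norm q"] by simp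
    moreover have "0 \<le> \<rho>/2 * (norm x)\<^sup>2" using rho_pos by simp
    ultimately show ?thesis using m[OF x] unfolding reg_obj_def by linarith
  qed
  then show ?thesis by (intro bdd_aboveI[of _ "norm q * B - m"]) auto
qed

lemma reg_obj_strongly_concave:
  assumes x: "x \<in> efdom f" and y: "y \<in> efdom f" and t: "0 \<le> t" "t \<le> 1"
  shows "(1-t) * reg_obj q x + t * reg_obj q y + \<rho>/2 * t * (1-t) * (norm (x - y))\<^sup>2
           \<le> reg_obj q ((1-t) *\<^sub>R x + t *\<^sub>R y)"
proof -
  have "inner q ((1-t) *\<^sub>R x + t *\<^sub>R y) = (1-t) * inner q x + t * inner q y"
    by (simp add: inner_add_right)
  moreover have "\<rho>/2 * (norm ((1-t) *\<^sub>R x + t *\<^sub>R y))\<^sup>2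
      = (1-t) * (\<rho>/2 * (norm x)\<^sup>2) + t * (\<rho>/2 * (norm y)\<^sup>2) - \<rho>/2 * t * (1-t) * (norm (x - y))\<^sup>2"
    unfolding norm_convex_comb_sq by (simp add: field_simps)
  ultimately show ?thesis
    using fval_convex(2)[OF x y t] unfolding reg_obj_def by (simp add: algebra_simps)
qed

lemma reg_obj_le_Sup: "x \<in> efdom f \<Longrightarrow> reg_obj q x \<le> Sup (reg_obj q ` efdom f)"
  using reg_obj_bdd_above by (intro cSup_upper) auto

text \<open>Maximizing sequences are Cauchy, by strong concavity at midpoints.\<close>

lemma reg_maximizing_Cauchy:
  assumes X: "\<And>n. X n \<in> efdom f"
    and lim: "(\<lambda>n. reg_obj q (X n)) \<longlonglongrightarrow> Sup (reg_obj q ` efdom f)"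
  shows "Cauchy X"
proof (rule metric_CauchyI)
  fix e :: real assume e: "0 < e"
  define S where "S = Sup (reg_obj q ` efdom f)"
  have "eventually (\<lambda>n. S - \<rho>/8 * e\<^sup>2 < reg_obj q (X n)) sequentially"
    using lim unfolding S_def[symmetric] by (rule order_tendstoD) (use rho_pos e in simp)
  then obtain N where N: "\<And>n. N \<le> n \<Longrightarrow> S - \<rho>/8 * e\<^sup>2 < reg_obj q (X n)"
    unfolding eventually_sequentially by blast
  show "\<exists>M. \<forall>m\<ge>M. \<forall>n\<ge>M. dist (X m) (X n) < e"
  proof (intro exI allI impI)
    fix m n assume mn: "N \<le> m" "N \<le> n"
    define z where "z = (1 - 1/2) *\<^sub>R X m + (1/2) *\<^sub>R X n"
    have "(1 - 1/2) * reg_obj q (X m) + 1/2 * reg_obj q (X n)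
            + \<rho>/2 * (1/2) * (1 - 1/2) * (norm (X m - X n))\<^sup>2 \<le> reg_obj q z"
      unfolding z_def by (rule reg_obj_strongly_concave[OF X X]) auto
    moreover have "reg_obj q z \<le> S"
      unfolding S_def z_def by (rule reg_obj_le_Sup, rule fval_convex(1)[OF X X]) auto
    ultimately have "\<rho> * (norm (X m - X n))\<^sup>2 < \<rho> * e\<^sup>2"
      using N[OF mn(1)] N[OF mn(2)] by simp
    then have "(norm (X m - X n))\<^sup>2 < e\<^sup>2" using rho_pos by simp
    then show "dist (X m) (X n) < e" using e by (simp add: dist_norm power_less_imp_less_base)
  qed
qed

lemma reg_limit_value:
  assumes X: "\<And>n. X n \<in> efdom f" and lim: "X \<longlonglongrightarrow> x"
    and vals: "(\<lambda>n. reg_obj q (X n)) \<longlonglongrightarrow> S"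
  shows "x \<in> efdom f" and "S \<le> reg_obj q x"
proof -
  define \<phi> where "\<phi> y = inner q y - \<rho>/2 * (norm y)\<^sup>2" for y
  have "(\<lambda>n. \<phi> (X n) - reg_obj q (X n)) \<longlonglongrightarrow> \<phi> x - S"
    unfolding \<phi>_def by (intro tendsto_intros lim vals)
  then have fval_lim: "(\<lambda>n. fval (X n)) \<longlonglongrightarrow> \<phi> x - S"
    by (simp add: \<phi>_def reg_obj_def)
  have fx: "f x \<le> ereal (\<phi> x - S)"
  proof (rule ccontr)
    assume "\<not> ?thesis"
    then have "ereal (\<phi> x - S) < f x" by simp
    then obtain r where "ereal (\<phi> x - S) < ereal r" "ereal r < f x"
      using ereal_dense2 by blast
    then have r: "\<phi> x - S < r" "ereal r < f x" by simp_all
    obtain \<delta> where \<delta>: "0 < \<delta>" "\<And>y. dist y x < \<delta> \<Longrightarrow> ereal r < f y"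
      using f_lsc_ball[OF r(2)] by blast
    have "eventually (\<lambda>n. dist (X n) x < \<delta> \<and> fval (X n) < r) sequentially"
      using tendstoD[OF lim \<delta>(1)] order_tendstoD(2)[OF fval_lim r(1)] by eventually_elim simp
    then obtain n where "dist (X n) x < \<delta>" "fval (X n) < r"
      using eventually_happens'[OF sequentially_bot] by blast
    then show False using \<delta>(2) f_in_dom[OF X] by fastforce
  qed
  then show dom: "x \<in> efdom f" unfolding efdom_def by (auto intro: le_less_trans)
  show "S \<le> reg_obj q x" using fx f_in_dom[OF dom] by (simp add: reg_obj_def \<phi>_def)
qed

text \<open>The supremum defining \<open>f\<^sup>*\<^sub>\<rho>(q)\<close> is attained (completeness of the space).\<close>

lemma reg_maximizer_exists: "\<exists>x\<in>efdom f. \<forall>y\<in>efdom f. reg_obj q y \<le> reg_obj q x"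
proof -
  define S where "S = Sup (reg_obj q ` efdom f)"
  have "\<exists>x\<in>efdom f. S - inverse (real (Suc n)) < reg_obj q x" for n
  proof -
    have "S - inverse (real (Suc n)) < S" by simp
    then show ?thesis
      unfolding S_def using dom_nonempty reg_obj_bdd_above by (subst (asm) less_cSup_iff) auto
  qed
  then obtain X where X: "\<And>n. X n \<in> efdom f" "\<And>n. S - inverse (real (Suc n)) < reg_obj q (X n)"
    by metis
  have lower_lim: "(\<lambda>n. S - inverse (real (Suc n))) \<longlonglongrightarrow> S"
    using tendsto_diff[OF tendsto_const LIMSEQ_inverse_real_of_nat] by simp
  have lower_ev: "eventually (\<lambda>n. S - inverse (real (Suc n)) \<le> reg_obj q (X n)) sequentially"
    using X(2) by (simp add: less_imp_le)
  have upper_ev: "eventually (\<lambda>n. reg_obj q (X n) \<le> S) sequentially"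
    using reg_obj_le_Sup[OF X(1)] by (simp add: S_def)
  have vals: "(\<lambda>n. reg_obj q (X n)) \<longlonglongrightarrow> S"
    by (rule tendsto_sandwich[OF lower_ev upper_ev lower_lim tendsto_const])
  have "convergent X"
    using reg_maximizing_Cauchy[OF X(1) vals[unfolded S_def]] by (simp add: Cauchy_convergent_iff)
  then obtain x where "X \<longlonglongrightarrow> x" unfolding convergent_def by blast
  then have "x \<in> efdom f" "S \<le> reg_obj q x" using reg_limit_value[OF X(1) _ vals] by auto
  then show ?thesis using reg_obj_le_Sup unfolding S_def by (meson order_trans)
qed

definition reg_arg :: "'a \<Rightarrow> 'a" where
  "reg_arg q = (SOME x. x \<in> efdom f \<and> (\<forall>y\<in>efdom f. reg_obj q y \<le> reg_obj q x))"

definition reg_conj :: "'a \<Rightarrow> real" where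
  "reg_conj q = reg_obj q (reg_arg q)"

lemma reg_arg: "reg_arg q \<in> efdom f" "y \<in> efdom f \<Longrightarrow> reg_obj q y \<le> reg_conj q"
  using someI_ex[OF reg_maximizer_exists[of q, unfolded Bex_def]]
  unfolding reg_arg_def[symmetric] reg_conj_def by blast+

lemma reg_quadratic_growth:
  assumes y: "y \<in> efdom f"
  shows "reg_obj q y + \<rho>/2 * (norm (y - reg_arg q))\<^sup>2 \<le> reg_conj q"
proof -
  define N where "N = (norm (reg_arg q - y))\<^sup>2"
  have step: "reg_obj q y - reg_conj q + \<rho>/2 * N * (1 - t) \<le> 0" if t: "0 < t" "t < 1" for t
  proof -
    have "(1-t) * reg_conj q + t * reg_obj q y + \<rho>/2 * t * (1-t) * N
            \<le> reg_obj q ((1-t) *\<^sub>R reg_arg q + t *\<^sub>R y)"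
      using reg_obj_strongly_concave[OF reg_arg(1) y, of t q] t unfolding reg_conj_def N_def
      by simp
    also have "\<dots> \<le> reg_conj q" using fval_convex(1)[OF reg_arg(1) y] t by (intro reg_arg(2)) simp_all
    finally have "t * (reg_obj q y - reg_conj q + \<rho>/2 * N * (1 - t)) \<le> 0"
      by (simp add: algebra_simps)
    then show ?thesis using t by (simp add: mult_le_0_iff)
  qed
  have "0 \<le> \<rho>/2 * N" using rho_pos by (simp add: N_def)
  then have "reg_obj q y - reg_conj q + \<rho>/2 * N \<le> 0"
    using step by (rule nonpos_of_nonpos_for_small_t)
  then show ?thesis by (simp add: N_def norm_minus_commute)
qed

lemma reg_conj_lower: "reg_conj q + inner (q' - q) (reg_arg q) \<le> reg_conj q'"
proof -
  have "reg_obj q' (reg_arg q) = reg_conj q + inner (q' - q) (reg_arg q)"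
    by (simp add: reg_obj_def reg_conj_def inner_diff_left)
  then show ?thesis using reg_arg(2)[OF reg_arg(1)] by metis
qed

lemma reg_conj_upper:
  "reg_conj q' \<le> reg_conj q + inner (q' - q) (reg_arg q) + 1/(2*\<rho>) * (norm (q' - q))\<^sup>2"
proof -
  define x x' d where "x = reg_arg q" and "x' = reg_arg q'" and "d = q' - q"
  have "reg_conj q' = reg_obj q x' + inner d x'"
    by (simp add: reg_conj_def reg_obj_def x'_def d_def inner_diff_left)
  moreover have "reg_obj q x' + \<rho>/2 * (norm (x' - x))\<^sup>2 \<le> reg_conj q"
    unfolding x_def x'_def by (rule reg_quadratic_growth[OF reg_arg(1)])
  moreover have "inner d (x' - x) - \<rho>/2 * (norm (x' - x))\<^sup>2 \<le> (norm d)\<^sup>2/(2*\<rho>)"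
    by (rule inner_minus_sq_le[OF rho_pos])
  ultimately show ?thesis unfolding d_def[symmetric] x_def[symmetric] by (simp add: inner_diff_right)
qed

lemma fconj_rho_eq: "fconj_rho \<rho> f q = ereal (reg_conj q)"
  unfolding fconj_rho_def
proof (rule antisym)
  show "(SUP x. ereal (inner q x) - f x - ereal (\<rho>/2 * (norm x)\<^sup>2)) \<le> ereal (reg_conj q)"
  proof (rule SUP_least)
    fix x
    show "ereal (inner q x) - f x - ereal (\<rho>/2 * (norm x)\<^sup>2) \<le> ereal (reg_conj q)"
      using reg_arg(2)[of x q] by (cases "x \<in> efdom f") (simp_all add: f_in_dom f_notin_dom reg_obj_def)
  qed
  show "ereal (reg_conj q) \<le> (SUP x. ereal (inner q x) - f x - ereal (\<rho>/2 * (norm x)\<^sup>2))"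
    by (rule SUP_upper2[of "reg_arg q"]) (simp_all add: f_in_dom[OF reg_arg(1)] reg_obj_def reg_conj_def)
qed

lemma Dconst_upper: "x \<in> efdom f \<Longrightarrow> (norm x)\<^sup>2 / 2 \<le> Dconst f"
proof -
  assume x: "x \<in> efdom f"
  obtain B where B: "0 \<le> B" "\<And>x. x \<in> efdom f \<Longrightarrow> norm x \<le> B" using dom_bound by blast
  have "bdd_above ((\<lambda>x. (norm x)\<^sup>2 / 2) ` efdom f)"
    by (rule bdd_aboveI[of _ "B\<^sup>2 / 2"]) (auto intro!: power_mono B)
  then show ?thesis unfolding Dconst_def using x by (intro cSUP_upper) auto
qed

lemma fconj_between:
  shows "ereal (reg_conj q) \<le> fconj f q" and "fconj f q \<le> ereal (reg_conj q + \<rho> * Dconst f)"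
proof -
  show "ereal (reg_conj q) \<le> fconj f q"
    unfolding fconj_def using rho_pos
    by (intro SUP_upper2[of "reg_arg q"]) (simp_all add: f_in_dom[OF reg_arg(1)] reg_conj_def reg_obj_def)
  show "fconj f q \<le> ereal (reg_conj q + \<rho> * Dconst f)"
    unfolding fconj_def
  proof (rule SUP_least)
    fix x
    show "ereal (inner q x) - f x \<le> ereal (reg_conj q + \<rho> * Dconst f)"
    proof (cases "x \<in> efdom f")
      case True
      have "\<rho> * ((norm x)\<^sup>2 / 2) \<le> \<rho> * Dconst f"
        using Dconst_upper[OF True] rho_pos by (intro mult_left_mono) auto
      then show ?thesis using True reg_arg(2)[OF True, of q] by (simp add: f_in_dom reg_obj_def)
    qed (simp add: f_notin_dom)
  qed
qed

end

lemma adjoint_diff: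
  assumes adjoint: "\<And>x p. inner (Astar p) x = inner p (A x)"
  shows "inner (Astar p' - Astar p) x = inner (p' - p) (A x)"
  by (simp add: inner_diff_left adjoint)

lemma adjoint_norm_diff:
  fixes A :: "'a::real_inner \<Rightarrow> 'b::real_inner"
  assumes adjoint: "\<And>x p. inner (Astar p) x = inner p (A x)" and A_lin: "bounded_linear A"
  shows "norm (Astar p' - Astar p) \<le> onorm A * norm (p' - p)"
proof -
  define w where "w = Astar p' - Astar p"
  have "norm w * norm w = inner (p' - p) (A w)"
    using adjoint_diff[OF adjoint, of p' p w]
    by (simp add: w_def power2_norm_eq_inner flip: power2_eq_square)
  also have "\<dots> \<le> norm (p' - p) * norm (A w)" by (rule norm_cauchy_schwarz)
  also have "\<dots> \<le> norm (p' - p) * (onorm A * norm w)"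
    by (intro mult_left_mono onorm[OF A_lin]) simp
  finally have "norm w * norm w \<le> (onorm A * norm (p' - p)) * norm w" by (simp add: mult_ac)
  then show ?thesis
    using onorm_pos_le[OF A_lin] by (cases "w = 0") (auto simp: w_def mult_le_cancel_right)
qed

locale dual_problem =
  F: regularized_conjugate f \<rho> + Gc: strongly_convex_smooth g G \<mu> \<kappa>
  for f :: "'a::{real_inner, complete_space} \<Rightarrow> ereal" and \<rho> :: real
    and g :: "'b::euclidean_space \<Rightarrow> real" and G \<mu> \<kappa> +
  fixes A :: "'a \<Rightarrow> 'b" and Astar :: "'b \<Rightarrow> 'a"
  assumes A_lin: "bounded_linear A" and adjoint: "\<And>x p. inner (Astar p) x = inner p (A x)"
begin

definition dual_smooth :: "'b \<Rightarrow> real" where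
  "dual_smooth p = F.reg_conj (Astar p) + Gc.gconj (- p)"

definition dual_grad :: "'b \<Rightarrow> 'b" where
  "dual_grad p = A (F.reg_arg (Astar p)) - Gc.gconj_arg (- p)"

definition smoothness :: real where
  "smoothness = (onorm A)\<^sup>2 / \<rho> + 1 / \<mu>"

lemma dual_grad_inner: "inner (dual_grad p) d
    = inner (Astar (p + d) - Astar p) (F.reg_arg (Astar p)) + inner (- (p + d) - - p) (Gc.gconj_arg (- p))"
proof -
  have "inner (Astar (p + d) - Astar p) (F.reg_arg (Astar p)) = inner d (A (F.reg_arg (Astar p)))"
    using adjoint_diff[OF adjoint, of "p + d" p] by simp
  moreover have "inner (- (p + d) - - p) (Gc.gconj_arg (- p)) = - inner d (Gc.gconj_arg (- p))"
    by simp
  moreover have "inner (dual_grad p) d = inner d (A (F.reg_arg (Astar p))) - inner d (Gc.gconj_arg (- p))"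
    by (simp add: dual_grad_def inner_diff_right inner_commute)
  ultimately show ?thesis by linarith
qed

text \<open>\<open>\<theta>\<^sub>\<rho>\<close> is \<open>\<kappa>\<close>-strongly convex (the \<open>f\<close>-part is convex, the \<open>g\<close>-part strongly convex).\<close>

lemma dual_lower: "dual_smooth p + inner (dual_grad p) d + \<kappa>/2 * (norm d)\<^sup>2 \<le> dual_smooth (p + d)"
  using F.reg_conj_lower[of "Astar p" "Astar (p + d)"] Gc.gconj_lower[of "- p" "- (p + d)"]
  unfolding dual_smooth_def dual_grad_inner by simp

text \<open>\<open>\<theta>\<^sub>\<rho>\<close> is \<open>L(\<rho>)\<close>-smooth, since \<open>\<parallel>A\<^sup>*\<parallel> \<le> \<parallel>A\<parallel>\<close>.\<close>

lemma dual_upper: "dual_smooth (p + d) \<le> dual_smooth p + inner (dual_grad p) d + smoothness/2 * (norm d)\<^sup>2"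
proof -
  have "(norm (Astar (p + d) - Astar p))\<^sup>2 \<le> (onorm A * norm d)\<^sup>2"
    using adjoint_norm_diff[OF adjoint A_lin, of "p + d" p] by (intro power_mono) simp_all
  then have "1/(2*\<rho>) * (norm (Astar (p + d) - Astar p))\<^sup>2 \<le> 1/(2*\<rho>) * ((onorm A)\<^sup>2 * (norm d)\<^sup>2)"
    using F.rho_pos by (intro mult_left_mono) (simp_all add: power_mult_distrib)
  moreover have "smoothness/2 * (norm d)\<^sup>2
      = 1/(2*\<rho>) * ((onorm A)\<^sup>2 * (norm d)\<^sup>2) + 1/(2*\<mu>) * (norm (- (p + d) - - p))\<^sup>2"
    by (simp add: smoothness_def field_simps)
  ultimately show ?thesis
    using F.reg_conj_upper[of "Astar (p + d)" "Astar p"] Gc.gconj_upper[of "- (p + d)" "- p"]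
    unfolding dual_smooth_def dual_grad_inner by linarith
qed

text \<open>The constants are consistent: \<open>\<kappa> \<le> L(\<rho>)\<close> (the dual space is nontrivial).\<close>

lemma kappa_le_smoothness: "\<kappa> \<le> smoothness"
proof -
  obtain e :: 'b where "e \<in> Basis" using nonempty_Basis by blast
  then have nonzero: "e \<noteq> 0" by auto
  have upper: "dual_smooth e \<le> dual_smooth 0 + inner (dual_grad 0) e + smoothness/2 * (norm e)\<^sup>2"
    using dual_upper[of 0 e] by simp
  have lower: "dual_smooth 0 + inner (dual_grad 0) e + \<kappa>/2 * (norm e)\<^sup>2 \<le> dual_smooth e"
    using dual_lower[of 0 e] by simp
  show ?thesis by (rule quadratic_sandwich_constants[OF upper lower nonzero])
qed

lemma dual_smooth_strongly_convex: "smooth_strongly_convex dual_smooth dual_grad \<kappa> smoothness"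
  by unfold_locales (rule dual_upper dual_lower Gc.kappa_pos kappa_le_smoothness)+

lemma fconj_rho_dual: "fconj_rho \<rho> f (Astar p) + fconj (\<lambda>y. ereal (g y)) (- p) = ereal (dual_smooth p)"
  by (simp add: F.fconj_rho_eq Gc.fconj_eq_gconj dual_smooth_def)

lemma fconj_dual_between:
  shows "ereal (dual_smooth p) \<le> fconj f (Astar p) + fconj (\<lambda>y. ereal (g y)) (- p)"
    and "fconj f (Astar p) + fconj (\<lambda>y. ereal (g y)) (- p) \<le> ereal (dual_smooth p + \<rho> * Dconst f)"
proof -
  have "ereal (dual_smooth p) = ereal (F.reg_conj (Astar p)) + ereal (Gc.gconj (- p))"
    by (simp add: dual_smooth_def)
  also have "\<dots> \<le> fconj f (Astar p) + ereal (Gc.gconj (- p))"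
    by (rule add_right_mono[OF F.fconj_between(1)])
  finally show "ereal (dual_smooth p) \<le> fconj f (Astar p) + fconj (\<lambda>y. ereal (g y)) (- p)"
    unfolding Gc.fconj_eq_gconj .
  have "fconj f (Astar p) + ereal (Gc.gconj (- p))
          \<le> ereal (F.reg_conj (Astar p) + \<rho> * Dconst f) + ereal (Gc.gconj (- p))"
    by (rule add_right_mono[OF F.fconj_between(2)])
  also have "\<dots> = ereal (dual_smooth p + \<rho> * Dconst f)"
    by (simp add: dual_smooth_def)
  finally show "fconj f (Astar p) + fconj (\<lambda>y. ereal (g y)) (- p) \<le> ereal (dual_smooth p + \<rho> * Dconst f)"
    unfolding Gc.fconj_eq_gconj .
qed

end

text \<open>Transfer of the rates to a perturbation \<open>\<theta>\<close> with \<open>\<Theta> \<le> \<theta> \<le> \<Theta> + c\<close>: the gap of \<open>\<theta>\<close>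
  is the gap of \<open>\<Theta>\<close> plus \<open>c\<close>, and the initial gap of \<open>\<Theta>\<close> is at most that of \<open>\<theta>\<close> plus \<open>c\<close>.\<close>

lemma perturbed_fgm_rate:
  fixes \<Theta> :: "'b::euclidean_space \<Rightarrow> real" and \<theta> :: "'b \<Rightarrow> ereal"
  assumes ssc: "smooth_strongly_convex \<Theta> V \<kappa> L"
    and between: "\<And>p. ereal (\<Theta> p) \<le> \<theta> p" "\<And>p. \<theta> p \<le> ereal (\<Theta> p + c)"
    and opt: "\<And>p. \<theta> pstar \<le> \<theta> p"
  defines "pk \<equiv> \<lambda>k. fst (fgm V L ((sqrt L - sqrt \<kappa>) / (sqrt L + sqrt \<kappa>)) k)"
  shows "\<theta> (pk k) - \<theta> pstar
           \<le> ereal c + 2 * (\<theta> 0 - \<theta> pstar + ereal c) * ereal (exp (- real k * sqrt (\<kappa> / L)))"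
    and "norm (V (pk k))
           \<le> 2 * sqrt (L * real_of_ereal (\<theta> 0 - \<theta> pstar + ereal c)) * exp (- (real k / 2) * sqrt (\<kappa> / L))"
proof -
  interpret smooth_strongly_convex \<Theta> V \<kappa> L by (rule ssc)
  obtain xs where xs: "\<And>p. \<Theta> xs \<le> \<Theta> p"
    using quadratic_growth_attains_min[OF continuous kappa_pos, of "V 0"] lower[of 0] by auto
  define \<theta>r where "\<theta>r p = real_of_ereal (\<theta> p)" for p
  have \<theta>_eq: "\<theta> p = ereal (\<theta>r p)" for p
    using between[of p] unfolding \<theta>r_def by (cases "\<theta> p") auto
  have \<theta>r: "\<Theta> p \<le> \<theta>r p" "\<theta>r p \<le> \<Theta> p + c" "\<theta>r pstar \<le> \<theta>r p" for p
    using between[of p] opt[of p] unfolding \<theta>_eq by simp_all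
  define M where "M = \<theta>r 0 - \<theta>r pstar + c"
  have M: "\<Theta> 0 - \<Theta> xs \<le> M" using \<theta>r[of 0] \<theta>r[of xs] unfolding M_def by linarith
  have "\<theta>r (pk k) - \<theta>r pstar \<le> c + 2 * M * exp (- real k * sqrt (\<kappa> / L))"
    using fgm_gap_rate[OF xs M, of k] \<theta>r[of "pk k"] \<theta>r[of pstar] xs[of pstar]
    unfolding pk_def by linarith
  then show "\<theta> (pk k) - \<theta> pstar
           \<le> ereal c + 2 * (\<theta> 0 - \<theta> pstar + ereal c) * ereal (exp (- real k * sqrt (\<kappa> / L)))"
    unfolding \<theta>_eq M_def by simp
  show "norm (V (pk k))
           \<le> 2 * sqrt (L * real_of_ereal (\<theta> 0 - \<theta> pstar + ereal c)) * exp (- (real k / 2) * sqrt (\<kappa> / L))"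
    using fgm_gradient_rate[OF xs M, of k] unfolding pk_def \<theta>_eq M_def by simp
qed

text \<open>Lower semicontinuity of \<open>g\<close> and the domain condition are automatic here, since \<open>g\<close> is
  real valued and differentiable.\<close>

theorem mainTheorem9:
  fixes f :: "'a::{real_inner, complete_space} \<Rightarrow> ereal"
    and g :: "'b::euclidean_space \<Rightarrow> real"
    and A :: "'a \<Rightarrow> 'b" and Astar :: "'b \<Rightarrow> 'a"
    and \<mu> \<kappa> \<rho> :: real and pstar :: 'b
  assumes f_proper: "eproper f" and f_convex: "econvex f" and f_lsc: "elsc f"
    and f_bdd_dom: "bounded (efdom f)"
    and g_strong: "\<mu> > 0" "convex_on UNIV (\<lambda>y. g y - \<mu> / 2 * (norm y)\<^sup>2)"
    and g_lsc: "elsc (\<lambda>y. ereal (g y))"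
    and A_lin: "bounded_linear A"
    and Astar_adj: "\<And>x p. inner (Astar p) x = inner p (A x)"
    and dom_meet: "A ` efdom f \<inter> efdom (\<lambda>y. ereal (g y)) \<noteq> {}"
    and \<kappa>_pos: "\<kappa> > 0"
    and g_grad: "\<exists>G. (\<forall>y. (g has_derivative (\<lambda>h. inner (G y) h)) (at y))
                    \<and> (\<forall>y z. norm (G y - G z) \<le> (1 / \<kappa>) * norm (y - z))"
    and \<rho>_pos: "\<rho> > 0"
  defines "\<theta> \<equiv> \<lambda>p. fconj f (Astar p) + fconj (\<lambda>y. ereal (g y)) (- p)"
    and "\<theta>\<rho> \<equiv> \<lambda>p. fconj_rho \<rho> f (Astar p) + fconj (\<lambda>y. ereal (g y)) (- p)"
    and "L \<equiv> (onorm A)\<^sup>2 / \<rho> + 1 / \<mu>"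
  assumes pstar_opt: "\<And>p. \<theta> pstar \<le> \<theta> p"
  defines "Gr \<equiv> grad (\<lambda>p. real_of_ereal (\<theta>\<rho> p))"
  defines "pk \<equiv> \<lambda>k. fst (fgm Gr L ((sqrt L - sqrt \<kappa>) / (sqrt L + sqrt \<kappa>)) k)"
  shows "\<forall>k. (\<theta> (pk k) - \<theta> pstar
             \<le> ereal (\<rho> * Dconst f)
               + 2 * (\<theta> 0 - \<theta> pstar + ereal (\<rho> * Dconst f))
                   * ereal (exp (- real k * sqrt (\<kappa> / L))))
          \<and> (norm (Gr (pk k))
             \<le> 2 * sqrt (L * real_of_ereal (\<theta> 0 - \<theta> pstar + ereal (\<rho> * Dconst f)))
                 * exp (- (real k / 2) * sqrt (\<kappa> / L)))"
proof -
  obtain G where G: "\<And>y. (g has_derivative (\<lambda>h. inner (G y) h)) (at y)"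
      "\<And>y z. norm (G y - G z) \<le> (1 / \<kappa>) * norm (y - z)"
    using g_grad by blast
  have "dual_problem f \<rho> g G \<mu> \<kappa> A Astar"
    using f_proper f_convex f_lsc f_bdd_dom \<rho>_pos G g_strong \<kappa>_pos A_lin Astar_adj
    by (simp add: dual_problem_def dual_problem_axioms_def regularized_conjugate_def
        strongly_convex_smooth_def)
  then interpret dual_problem f \<rho> g G \<mu> \<kappa> A Astar .
  have ssc: "smooth_strongly_convex dual_smooth dual_grad \<kappa> L"
    unfolding L_def smoothness_def[symmetric] by (rule dual_smooth_strongly_convex)
  have "(\<lambda>p. real_of_ereal (\<theta>\<rho> p)) = dual_smooth"
    by (simp add: \<theta>\<rho>_def fconj_rho_dual)
  then have Gr: "Gr = dual_grad"
    unfolding Gr_def by (simp add: smooth_strongly_convex.grad_eq[OF ssc] fun_eq_iff)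
  have "ereal (dual_smooth p) \<le> \<theta> p" "\<theta> p \<le> ereal (dual_smooth p + \<rho> * Dconst f)" for p
    unfolding \<theta>_def by (rule fconj_dual_between)+
  from perturbed_fgm_rate[OF ssc this pstar_opt] show ?thesis
    unfolding pk_def Gr by blast
qed

end
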